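(* Consider the discrete setting described in the context, with constants $0<\gamma_1<\rho_\infty^*$, $\gamma_2>0$, and assume $\lambda=\Delta x/(2\Delta t)\ge v^*/2$. If $(\mathfrak f^n_{ij},\mathfrak g^n_{ij})_{i,j}$ satisfies, for all $i\in\mathcal I$, $j\in\mathcal J$, $$(\rho_\infty^*-\gamma_1)\chi_{1,j}\le\mathfrak f^n_{ij}\le(\rho_\infty^*+\gamma_2)\chi_{1,j},\qquad(\rho_\infty^*+\gamma_2)^{-1}\chi_{2,j}\le\mathfrak g^n_{ij}\le(\rho_\infty^*-\gamma_1)^{-1}\chi_{2,j},$$ then any solution $(\mathfrak f^{n+1}_{ij},\mathfrak g^{n+1}_{ij})_{i,j}$ of the truncated scheme $$\frac{\mathfrak f^{n+1}_{ij}-\mathfrak f^n_{ij}}{\Delta t}+\frac{1}{\Delta x\Delta v}\big(\mathcal F^{n+1}_{i+\frac12,j}-\mathcal F^{n+1}_{i-\frac12,j}\big)=\chi_{1,j}-\tilde\rho^{n+1}_{\mathfrak g,i}\tilde{\mathfrak f}^{n+1}_{ij},\quad \frac{\mathfrak g^{n+1}_{ij}-\mathfrak g^n_{ij}}{\Delta t}+\frac{1}{\Delta x\Delta v}\big(\mathcal G^{n+1}_{i+\frac12,j}-\mathcal G^{n+1}_{i-\frac12,j}\big)=\chi_{2,j}-\tilde\rho^{n+1}_{\mathfrak f,i}\tilde{\mathfrak g}^{n+1}_{ij}$$ satisfies the same bounds (with $n$ replaced by $n+1$) for all $i\in\mathcal I$, $j\in\mathcal J$.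
   Context: Space mesh: $N$ uniform cells of length $\Delta x$, $i\in\mathcal I=\mathbb Z/N\mathbb Z$ (periodic). Velocity mesh: $v^*>0$, $\Delta v=v^*/L$, $j\in\mathcal J=\{-L+1,\dots,L\}$, $v_j=(j-\tfrac12)\Delta v$. Time step $\Delta t>0$; $\lambda=\Delta x/(2\Delta t)$. $\rho_\infty^*>0$ a given constant. For $k=1,2$: $\chi_{k,j}>0$, $\chi_{k,j}=\chi_{k,1-j}$, $\sum_j\Delta v\chi_{k,j}=1$. Fluxes: $\mathcal F^{n+1}_{i+\frac12,j}=\Delta v\frac{v_j}{2}(\mathfrak f^{n+1}_{i+1,j}+\mathfrak f^{n+1}_{ij})-\Delta v\lambda(\mathfrak f^{n+1}_{i+1,j}-\mathfrak f^{n+1}_{ij})$, $\mathcal G$ likewise with $\mathfrak g$. Truncations: $\tilde{\mathfrak f}_{ij}=\min\big(\max(\mathfrak f_{ij},(\rho_\infty^*-\gamma_1)\chi_{1,j}),(\rho_\infty^*+\gamma_2)\chi_{1,j}\big)$, $\tilde{\mathfrak g}_{ij}=\min\big(\max(\mathfrak g_{ij},(\rho_\infty^*+\gamma_2)^{-1}\chi_{2,j}),(\rho_\infty^*-\gamma_1)^{-1}\chi_{2,j}\big)$; $\tilde\rho_{\mathfrak f,i}=\sum_j\Delta v\,\tilde{\mathfrak f}_{ij}$, $\tilde\rho_{\mathfrak g,i}=\sum_j\Delta v\,\tilde{\mathfrak g}_{ij}$. *)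

theory Defs
  imports Complex_Main
begin

text \<open>Space cells i in {0..<N} (periodic, i.e. Z/NZ represented by residues mod N);
velocity indices j in {-L+1..L}; v_j = (j - 1/2) dv with dv = vstar / L.\<close>

definition Jset :: "nat \<Rightarrow> int set" where
  "Jset L = {-(int L) + 1 .. int L}"

definition vel :: "real \<Rightarrow> nat \<Rightarrow> int \<Rightarrow> real" where
  "vel vstar L j = (real_of_int j - 1/2) * (vstar / real L)"

definition nxt :: "nat \<Rightarrow> nat \<Rightarrow> nat" where
  "nxt N i = (i + 1) mod N"

definition prv :: "nat \<Rightarrow> nat \<Rightarrow> nat" where
  "prv N i = (i + N - 1) mod N"

definition flux :: "nat \<Rightarrow> real \<Rightarrow> nat \<Rightarrow> real \<Rightarrow> real \<Rightarrow> (nat \<Rightarrow> int \<Rightarrow> real) \<Rightarrow> nat \<Rightarrow> int \<Rightarrow> real" where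
  "flux N vstar L dx dt h i j =
     (vstar / real L) * (vel vstar L j / 2) * (h (nxt N i) j + h i j)
     - (vstar / real L) * (dx / (2 * dt)) * (h (nxt N i) j - h i j)"

definition trunc :: "real \<Rightarrow> real \<Rightarrow> real \<Rightarrow> real" where
  "trunc lo hi x = min (max x lo) hi"

definition ftil :: "real \<Rightarrow> real \<Rightarrow> real \<Rightarrow> (int \<Rightarrow> real) \<Rightarrow> (nat \<Rightarrow> int \<Rightarrow> real) \<Rightarrow> nat \<Rightarrow> int \<Rightarrow> real" where
  "ftil rho g1 g2 chi1 f i j = trunc ((rho - g1) * chi1 j) ((rho + g2) * chi1 j) (f i j)"

definition gtil :: "real \<Rightarrow> real \<Rightarrow> real \<Rightarrow> (int \<Rightarrow> real) \<Rightarrow> (nat \<Rightarrow> int \<Rightarrow> real) \<Rightarrow> nat \<Rightarrow> int \<Rightarrow> real" where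
  "gtil rho g1 g2 chi2 g i j = trunc (inverse (rho + g2) * chi2 j) (inverse (rho - g1) * chi2 j) (g i j)"

definition rhotil :: "real \<Rightarrow> nat \<Rightarrow> (nat \<Rightarrow> int \<Rightarrow> real) \<Rightarrow> nat \<Rightarrow> real" where
  "rhotil vstar L ht i = (\<Sum>j\<in>Jset L. (vstar / real L) * ht i j)"

end

theory Submission
  imports Defs
begin

text \<open>A discrete maximum principle, for each velocity j separately. Under the CFL condition the
  implicit upwind transport term at cell i is a nonnegative combination of h(i) - h(i+1) and
  h(i) - h(i-1), hence nonnegative at a maximal cell. If the maximum exceeded the upper bound, the
  truncation would saturate there; since the normalisation of chi puts the truncated densities in
  [rho - g1, rho + g2] and its reciprocal interval, the reaction term is then nonpositive, so the
  maximum did not grow.\<close>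

lemma implicit_max_principle:
  fixes h h0 D R :: "'a \<Rightarrow> real"
  assumes I: "finite I" "I \<noteq> {}" and dt: "dt > 0"
    and scheme: "\<And>i. i \<in> I \<Longrightarrow> (h i - h0 i) / dt + D i = R i"
    and transport: "\<And>i. i \<in> I \<Longrightarrow> (\<forall>k\<in>I. h k \<le> h i) \<Longrightarrow> D i \<ge> 0"
    and initial: "\<And>i. i \<in> I \<Longrightarrow> h0 i \<le> U"
    and reaction: "\<And>i. i \<in> I \<Longrightarrow> h i > U \<Longrightarrow> R i \<le> 0"
    and k: "k \<in> I"
  shows "h k \<le> U"
proof -
  obtain i where i: "i \<in> I" and h_max: "\<forall>k\<in>I. h k \<le> h i"
    using Max_in[of "h ` I"] Max_ge[of "h ` I"] I by fastforce
  have "h i \<le> U"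
  proof (rule ccontr)
    assume "\<not> h i \<le> U"
    then have "R i \<le> 0" using reaction i by simp
    with scheme[OF i] transport[OF i h_max] have "(h i - h0 i) / dt \<le> 0" by linarith
    with dt have "h i \<le> h0 i" by (simp add: divide_le_0_iff)
    with initial[OF i] \<open>\<not> h i \<le> U\<close> show False by simp
  qed
  with h_max k show ?thesis by force
qed

lemma implicit_min_principle:
  fixes h h0 D R :: "'a \<Rightarrow> real"
  assumes I: "finite I" "I \<noteq> {}" and dt: "dt > 0"
    and scheme: "\<And>i. i \<in> I \<Longrightarrow> (h i - h0 i) / dt + D i = R i"
    and transport: "\<And>i. i \<in> I \<Longrightarrow> (\<forall>k\<in>I. h i \<le> h k) \<Longrightarrow> D i \<le> 0"
    and initial: "\<And>i. i \<in> I \<Longrightarrow> Lo \<le> h0 i"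
    and reaction: "\<And>i. i \<in> I \<Longrightarrow> h i < Lo \<Longrightarrow> R i \<ge> 0"
    and k: "k \<in> I"
  shows "Lo \<le> h k"
proof -
  have "- h k \<le> - Lo"
  proof (rule implicit_max_principle[where h = "\<lambda>i. - h i" and h0 = "\<lambda>i. - h0 i"
        and D = "\<lambda>i. - D i" and R = "\<lambda>i. - R i", OF I dt _ _ _ _ k])
    fix i assume "i \<in> I"
    then have "(h i - h0 i) / dt + D i = R i" by (rule scheme)
    then show "(- h i - - h0 i) / dt + - D i = - R i"
      by (simp add: diff_divide_distrib)
  qed (use transport initial reaction in auto)
  then show ?thesis by simp
qed

lemma nxt_less: "N \<ge> 1 \<Longrightarrow> nxt N i < N"
  unfolding nxt_def by simp

lemma prv_less: "N \<ge> 1 \<Longrightarrow> prv N i < N"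
  unfolding prv_def by simp

lemma nxt_prv: "N \<ge> 1 \<Longrightarrow> i < N \<Longrightarrow> nxt N (prv N i) = i"
  unfolding nxt_def prv_def by (simp add: mod_Suc_eq)

lemma abs_vel_le:
  assumes "L \<ge> 1" "vstar > 0" "j \<in> Jset L"
  shows "\<bar>vel vstar L j\<bar> \<le> vstar"
proof -
  have "\<bar>real_of_int j - 1/2\<bar> \<le> real L"
    using assms(3) unfolding Jset_def by auto
  then have "\<bar>real_of_int j - 1/2\<bar> * (vstar / real L) \<le> real L * (vstar / real L)"
    using assms(2) by (intro mult_right_mono) auto
  with assms(1,2) show ?thesis
    unfolding vel_def by (simp add: abs_mult)
qed

lemma flux_diff_upwind:
  assumes "N \<ge> 1" "i < N"
  shows "flux N vstar L dx dt h i j - flux N vstar L dx dt h (prv N i) j =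
    (vstar / real L) * ((dx / (2 * dt) - vel vstar L j / 2) * (h i j - h (nxt N i) j)
      + (dx / (2 * dt) + vel vstar L j / 2) * (h i j - h (prv N i) j))"
proof -
  have "a * w * (x + y) - a * lam * (x - y) - (a * w * (y + z) - a * lam * (y - z))
      = a * ((lam - w) * (y - x) + (lam + w) * (y - z))" for a w lam x y z :: real
    by (simp add: algebra_simps)
  then show ?thesis
    unfolding flux_def nxt_prv[OF assms] .
qed

lemma upwind_coeffs_nonneg:
  assumes "L \<ge> 1" "vstar > 0" "dx / (2 * dt) \<ge> vstar / 2" "j \<in> Jset L"
  shows "dx / (2 * dt) - vel vstar L j / 2 \<ge> 0" "dx / (2 * dt) + vel vstar L j / 2 \<ge> 0"
  using abs_vel_le[OF assms(1,2,4)] assms(3) by linarith+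

context
  fixes N L :: nat and vstar dx dt :: real and j :: int
  assumes N: "N \<ge> 1" and L: "L \<ge> 1" and vstar: "vstar > 0"
    and CFL: "dx / (2 * dt) \<ge> vstar / 2" and j: "j \<in> Jset L"
begin

lemma flux_diff_nonneg_at_max:
  assumes i: "i < N" and h_max: "\<forall>k<N. h k j \<le> h i j"
  shows "flux N vstar L dx dt h i j - flux N vstar L dx dt h (prv N i) j \<ge> 0"
proof -
  have "h i j - h (nxt N i) j \<ge> 0" "h i j - h (prv N i) j \<ge> 0"
    using h_max nxt_less[OF N] prv_less[OF N] by auto
  with upwind_coeffs_nonneg[OF L vstar CFL j] vstar show ?thesis
    unfolding flux_diff_upwind[OF N i] by simp
qed

lemma flux_diff_nonpos_at_min:
  assumes i: "i < N" and h_min: "\<forall>k<N. h i j \<le> h k j"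
  shows "flux N vstar L dx dt h i j - flux N vstar L dx dt h (prv N i) j \<le> 0"
proof -
  have "h i j - h (nxt N i) j \<le> 0" "h i j - h (prv N i) j \<le> 0"
    using h_min nxt_less[OF N] prv_less[OF N] by auto
  with upwind_coeffs_nonneg[OF L vstar CFL j] vstar show ?thesis
    unfolding flux_diff_upwind[OF N i]
    by (intro mult_nonneg_nonpos add_nonpos_nonpos) auto
qed

lemma truncated_scheme_preserves_bounds:
  fixes h h_old :: "nat \<Rightarrow> int \<Rightarrow> real" and r :: "nat \<Rightarrow> real"
  assumes dx: "dx > 0" and dt: "dt > 0" and lo_hi: "lo \<le> hi"
    and initial: "\<And>i. i < N \<Longrightarrow> lo \<le> h_old i j \<and> h_old i j \<le> hi"
    and scheme: "\<And>i. i < N \<Longrightarrow>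
       (h i j - h_old i j) / dt
       + (flux N vstar L dx dt h i j - flux N vstar L dx dt h (prv N i) j) / (dx * (vstar / real L))
       = c - r i * trunc lo hi (h i j)"
    and reaction: "\<And>i. i < N \<Longrightarrow> r i * lo \<le> c \<and> c \<le> r i * hi"
    and i: "i < N"
  shows "lo \<le> h i j \<and> h i j \<le> hi"
proof -
  have cells: "finite {..<N}" "{..<N} \<noteq> {}" using N by (auto simp: lessThan_empty_iff)
  have scale: "dx * (vstar / real L) > 0" using dx vstar L by simp
  have "h i j \<le> hi"
  proof (rule implicit_max_principle[OF cells dt, where h = "\<lambda>i. h i j"])
    fix k assume "k \<in> {..<N}" "\<forall>k'\<in>{..<N}. h k' j \<le> h k j"
    then show "0 \<le> (flux N vstar L dx dt h k j - flux N vstar L dx dt h (prv N k) j)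
        / (dx * (vstar / real L))"
      by (intro divide_nonneg_pos flux_diff_nonneg_at_max scale) auto
  next
    fix k assume "k \<in> {..<N}" "hi < h k j"
    then show "c - r k * trunc lo hi (h k j) \<le> 0"
      using reaction[of k] by (simp add: trunc_def)
  qed (use scheme initial i in auto)
  moreover have "lo \<le> h i j"
  proof (rule implicit_min_principle[OF cells dt, where h = "\<lambda>i. h i j"])
    fix k assume "k \<in> {..<N}" "\<forall>k'\<in>{..<N}. h k j \<le> h k' j"
    then show "(flux N vstar L dx dt h k j - flux N vstar L dx dt h (prv N k) j)
        / (dx * (vstar / real L)) \<le> 0"
      by (intro divide_nonpos_pos flux_diff_nonpos_at_min scale) auto
  next
    fix k assume "k \<in> {..<N}" "h k j < lo"
    then show "0 \<le> c - r k * trunc lo hi (h k j)"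
      using reaction[of k] lo_hi by (simp add: trunc_def)
  qed (use scheme initial i in auto)
  ultimately show ?thesis by simp
qed

end

lemma trunc_between: "lo \<le> hi \<Longrightarrow> lo \<le> trunc lo hi x \<and> trunc lo hi x \<le> hi"
  unfolding trunc_def by auto

lemma rhotil_between:
  assumes vstar: "vstar \<ge> 0" and norm: "(\<Sum>j\<in>Jset L. (vstar / real L) * chi j) = 1"
    and between: "\<And>j. j \<in> Jset L \<Longrightarrow> a * chi j \<le> ht i j \<and> ht i j \<le> b * chi j"
  shows "a \<le> rhotil vstar L ht i \<and> rhotil vstar L ht i \<le> b"
proof -
  have total: "c = (\<Sum>j\<in>Jset L. (vstar / real L) * (c * chi j))" for c
  proof -
    have "(\<Sum>j\<in>Jset L. (vstar / real L) * (c * chi j)) = c * (\<Sum>j\<in>Jset L. (vstar / real L) * chi j)"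
      by (simp add: sum_distrib_left mult.left_commute)
    with norm show ?thesis by simp
  qed
  have "(\<Sum>j\<in>Jset L. (vstar / real L) * (a * chi j)) \<le> rhotil vstar L ht i"
    unfolding rhotil_def using vstar between by (intro sum_mono mult_left_mono; simp)
  moreover have "rhotil vstar L ht i \<le> (\<Sum>j\<in>Jset L. (vstar / real L) * (b * chi j))"
    unfolding rhotil_def using vstar between by (intro sum_mono mult_left_mono; simp)
  ultimately show ?thesis using total[of a] total[of b] by simp
qed

lemma reaction_sign_at_bounds:
  fixes a b c r :: real
  assumes a: "0 < a" "a \<le> b" and c: "0 \<le> c" and r: "inverse b \<le> r" "r \<le> inverse a"
  shows "r * (a * c) \<le> c \<and> c \<le> r * (b * c)"
proof -
  have "r * a \<le> 1" using mult_right_mono[OF r(2), of a] a by simp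
  moreover have "1 \<le> r * b" using mult_right_mono[OF r(1), of b] a by simp
  ultimately show ?thesis
    using c mult_right_mono[of "r * a" 1 c] mult_right_mono[of 1 "r * b" c]
    by (simp add: mult.assoc)
qed

theorem lemma5p5:
  fixes N L :: nat and dx dt vstar rho g1 g2 :: real
    and chi1 chi2 :: "int \<Rightarrow> real"
    and f0 g0 f g :: "nat \<Rightarrow> int \<Rightarrow> real"
  assumes N: "N \<ge> 1" and L: "L \<ge> 1"
    and dx: "dx > 0" and dt: "dt > 0" and vstar: "vstar > 0"
    and rho: "rho > 0" and g1: "0 < g1" "g1 < rho" and g2: "g2 > 0"
    and chi_pos: "\<And>j. j \<in> Jset L \<Longrightarrow> chi1 j > 0 \<and> chi2 j > 0"
    and chi_sym: "\<And>j. j \<in> Jset L \<Longrightarrow> chi1 j = chi1 (1 - j) \<and> chi2 j = chi2 (1 - j)"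
    and chi1_norm: "(\<Sum>j\<in>Jset L. (vstar / real L) * chi1 j) = 1"
    and chi2_norm: "(\<Sum>j\<in>Jset L. (vstar / real L) * chi2 j) = 1"
    and CFL: "dx / (2 * dt) \<ge> vstar / 2"
    and f0b: "\<And>i j. i < N \<Longrightarrow> j \<in> Jset L \<Longrightarrow>
               (rho - g1) * chi1 j \<le> f0 i j \<and> f0 i j \<le> (rho + g2) * chi1 j"
    and g0b: "\<And>i j. i < N \<Longrightarrow> j \<in> Jset L \<Longrightarrow>
               inverse (rho + g2) * chi2 j \<le> g0 i j \<and> g0 i j \<le> inverse (rho - g1) * chi2 j"
    and schf: "\<And>i j. i < N \<Longrightarrow> j \<in> Jset L \<Longrightarrow>
       (f i j - f0 i j) / dt
       + (flux N vstar L dx dt f i j - flux N vstar L dx dt f (prv N i) j) / (dx * (vstar / real L))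
       = chi1 j - rhotil vstar L (gtil rho g1 g2 chi2 g) i * ftil rho g1 g2 chi1 f i j"
    and schg: "\<And>i j. i < N \<Longrightarrow> j \<in> Jset L \<Longrightarrow>
       (g i j - g0 i j) / dt
       + (flux N vstar L dx dt g i j - flux N vstar L dx dt g (prv N i) j) / (dx * (vstar / real L))
       = chi2 j - rhotil vstar L (ftil rho g1 g2 chi1 f) i * gtil rho g1 g2 chi2 g i j"
  shows "\<forall>i<N. \<forall>j\<in>Jset L.
           (rho - g1) * chi1 j \<le> f i j \<and> f i j \<le> (rho + g2) * chi1 j \<and>
           inverse (rho + g2) * chi2 j \<le> g i j \<and> g i j \<le> inverse (rho - g1) * chi2 j"
proof (intro allI impI ballI)
  fix i j assume i: "i < N" and j: "j \<in> Jset L"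
  have rho_g: "0 < rho - g1" "rho - g1 \<le> rho + g2" using g1 g2 by auto
  then have inv_rho_g: "0 < inverse (rho + g2)" "inverse (rho + g2) \<le> inverse (rho - g1)"
    by (auto intro: le_imp_inverse_le)
  let ?rf = "rhotil vstar L (ftil rho g1 g2 chi1 f)"
  let ?rg = "rhotil vstar L (gtil rho g1 g2 chi2 g)"
  have rf: "rho - g1 \<le> ?rf k \<and> ?rf k \<le> rho + g2" for k
    using vstar rho_g unfolding ftil_def
    by (intro rhotil_between[OF _ chi1_norm] trunc_between mult_right_mono)
      (auto simp: chi_pos less_imp_le)
  have rg: "inverse (rho + g2) \<le> ?rg k \<and> ?rg k \<le> inverse (rho - g1)" for k
    using vstar inv_rho_g unfolding gtil_def
    by (intro rhotil_between[OF _ chi2_norm] trunc_between mult_right_mono)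
      (auto simp: chi_pos less_imp_le)
  have "(rho - g1) * chi1 j \<le> f i j \<and> f i j \<le> (rho + g2) * chi1 j"
  proof (rule truncated_scheme_preserves_bounds[OF N L vstar CFL j dx dt,
        where h = f and h_old = f0 and c = "chi1 j" and r = ?rg])
    show "\<And>k. k < N \<Longrightarrow> ?rg k * ((rho - g1) * chi1 j) \<le> chi1 j
        \<and> chi1 j \<le> ?rg k * ((rho + g2) * chi1 j)"
      using rho_g chi_pos[OF j] rg by (intro reaction_sign_at_bounds) auto
  qed (use rho_g chi_pos[OF j] f0b[OF _ j] schf[OF _ j] i in \<open>auto simp: ftil_def\<close>)
  moreover have "inverse (rho + g2) * chi2 j \<le> g i j \<and> g i j \<le> inverse (rho - g1) * chi2 j"
  proof (rule truncated_scheme_preserves_bounds[OF N L vstar CFL j dx dt,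
        where h = g and h_old = g0 and c = "chi2 j" and r = ?rf])
    show "\<And>k. k < N \<Longrightarrow> ?rf k * (inverse (rho + g2) * chi2 j) \<le> chi2 j
        \<and> chi2 j \<le> ?rf k * (inverse (rho - g1) * chi2 j)"
      using inv_rho_g chi_pos[OF j] rf rho_g by (intro reaction_sign_at_bounds) auto
  qed (use inv_rho_g chi_pos[OF j] g0b[OF _ j] schg[OF _ j] i in \<open>auto simp: gtil_def\<close>)
  ultimately show "(rho - g1) * chi1 j \<le> f i j \<and> f i j \<le> (rho + g2) * chi1 j \<and>
      inverse (rho + g2) * chi2 j \<le> g i j \<and> g i j \<le> inverse (rho - g1) * chi2 j"
    by simp
qed

end
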